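(* Let $G$ be a maximal outerplanar graph (with a fixed outerplanar embedding) with reduced graph $\widetilde{G}$ and almost-dual graph $\widehat{G}$. Then the following three sets are in one-to-one correspondence: the sets of central vertices of the copies of $S_3$ in $G$; the triangles (cycles on three vertices) in $\widetilde{G}$; and the vertices of degree $3$ in $\widehat{G}$.
   Context: A graph is maximal outerplanar if it is outerplanar and adding any single new edge yields a non-outerplanar graph. $S_3$ is the graph with vertices $x_1,x_2,x_3,y_1,y_2,y_3$ and edges $\{x_1,x_2\},\{x_1,x_3\},\{x_2,x_3\},\{x_1,y_1\},\{x_2,y_1\},\{x_2,y_2\},\{x_3,y_2\},\{x_3,y_3\},\{x_1,y_3\}$; its central vertices are $x_1,x_2,x_3$ and its central edges are the three edges among them. A copy of $S_3$ in $G$ is an induced subgraph of $G$ isomorphic to $S_3$. The reduced graph $\widetilde{G}$ is obtained by coloring, for every copy of $S_3$ in $G$, its central vertices and central edges, and then deleting from $G$ all uncolored vertices and uncolored edges. The almost-dual graph $\widehat{G}$ (with respect to the fixed embedding) has one vertex for every inner face of $G$, two vertices being adjacent iff the corresponding inner faces share an edge of $G$. *)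

theory Defs
  imports Main
begin

definition simple_graph :: "'a set \<Rightarrow> 'a set set \<Rightarrow> bool" where
  "simple_graph V E \<longleftrightarrow> finite V \<and>
     (\<forall>e\<in>E. \<exists>u v. e = {u, v} \<and> u \<noteq> v \<and> u \<in> V \<and> v \<in> V)"

text \<open>Outerplanar embeddings: the vertices are placed on a circle in the cyclic order
  given by an injective position map pos, edges are drawn as chords, and no two chords cross.\<close>
definition between :: "('a \<Rightarrow> nat) \<Rightarrow> 'a \<Rightarrow> 'a \<Rightarrow> 'a \<Rightarrow> bool" where
  "between pos a b w \<longleftrightarrow> min (pos a) (pos b) < pos w \<and> pos w < max (pos a) (pos b)"

definition crossing :: "('a \<Rightarrow> nat) \<Rightarrow> 'a set \<Rightarrow> 'a set \<Rightarrow> bool" where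
  "crossing pos e1 e2 \<longleftrightarrow> (\<exists>a b c d. e1 = {a, b} \<and> e2 = {c, d} \<and> distinct [a, b, c, d] \<and>
       between pos a b c \<noteq> between pos a b d)"

definition outerplanar_emb :: "'a set \<Rightarrow> 'a set set \<Rightarrow> ('a \<Rightarrow> nat) \<Rightarrow> bool" where
  "outerplanar_emb V E pos \<longleftrightarrow> simple_graph V E \<and> inj_on pos V \<and>
     (\<forall>e1\<in>E. \<forall>e2\<in>E. \<not> crossing pos e1 e2)"

definition outerplanar :: "'a set \<Rightarrow> 'a set set \<Rightarrow> bool" where
  "outerplanar V E \<longleftrightarrow> simple_graph V E \<and> (\<exists>pos. outerplanar_emb V E pos)"

definition maximal_outerplanar :: "'a set \<Rightarrow> 'a set set \<Rightarrow> bool" where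
  "maximal_outerplanar V E \<longleftrightarrow> outerplanar V E \<and>
     (\<forall>u\<in>V. \<forall>v\<in>V. u \<noteq> v \<and> {u, v} \<notin> E \<longrightarrow> \<not> outerplanar V (insert {u, v} E))"

text \<open>Inner faces of the embedding, identified with their vertex sets: F (at least 3 vertices)
  bounds an inner face iff cyclically consecutive vertices of F are adjacent and no edge
  (chord) separates vertices of F.\<close>
definition cyc_consec :: "('a \<Rightarrow> nat) \<Rightarrow> 'a set \<Rightarrow> 'a \<Rightarrow> 'a \<Rightarrow> bool" where
  "cyc_consec pos F u v \<longleftrightarrow> u \<in> F \<and> v \<in> F \<and> u \<noteq> v \<and>
     ((\<forall>w\<in>F. \<not> between pos u v w) \<or> (\<forall>w\<in>F - {u, v}. between pos u v w))"

definition separates :: "('a \<Rightarrow> nat) \<Rightarrow> 'a set \<Rightarrow> 'a set \<Rightarrow> bool" where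
  "separates pos e F \<longleftrightarrow> (\<exists>a b. e = {a, b} \<and> (\<exists>w\<in>F. between pos a b w) \<and>
       (\<exists>w\<in>F. w \<notin> {a, b} \<and> \<not> between pos a b w))"

definition inner_face :: "'a set \<Rightarrow> 'a set set \<Rightarrow> ('a \<Rightarrow> nat) \<Rightarrow> 'a set \<Rightarrow> bool" where
  "inner_face V E pos F \<longleftrightarrow> F \<subseteq> V \<and> card F \<ge> 3 \<and>
     (\<forall>u v. cyc_consec pos F u v \<longrightarrow> {u, v} \<in> E) \<and> (\<forall>e\<in>E. \<not> separates pos e F)"

definition dual_adj :: "'a set set \<Rightarrow> 'a set \<Rightarrow> 'a set \<Rightarrow> bool" where
  "dual_adj E F1 F2 \<longleftrightarrow> F1 \<noteq> F2 \<and> (\<exists>e\<in>E. e \<subseteq> F1 \<inter> F2)"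

definition dual_degree :: "'a set \<Rightarrow> 'a set set \<Rightarrow> ('a \<Rightarrow> nat) \<Rightarrow> 'a set \<Rightarrow> nat" where
  "dual_degree V E pos F = card {F'. inner_face V E pos F' \<and> dual_adj E F F'}"

definition dual_deg3 :: "'a set \<Rightarrow> 'a set set \<Rightarrow> ('a \<Rightarrow> nat) \<Rightarrow> 'a set set" where
  "dual_deg3 V E pos = {F. inner_face V E pos F \<and> dual_degree V E pos F = 3}"

text \<open>Induced copies of S_3 (x's central, y's outer).\<close>
definition S3_copy :: "'a set \<Rightarrow> 'a set set \<Rightarrow> 'a \<Rightarrow> 'a \<Rightarrow> 'a \<Rightarrow> 'a \<Rightarrow> 'a \<Rightarrow> 'a \<Rightarrow> bool" where
  "S3_copy V E x1 x2 x3 y1 y2 y3 \<longleftrightarrow>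
     {x1, x2, x3, y1, y2, y3} \<subseteq> V \<and> distinct [x1, x2, x3, y1, y2, y3] \<and>
     {e\<in>E. e \<subseteq> {x1, x2, x3, y1, y2, y3}} =
       {{x1, x2}, {x1, x3}, {x2, x3}, {x1, y1}, {x2, y1}, {x2, y2}, {x3, y2}, {x3, y3}, {x1, y3}}"

definition central_sets :: "'a set \<Rightarrow> 'a set set \<Rightarrow> 'a set set" where
  "central_sets V E = {{x1, x2, x3} | x1 x2 x3 y1 y2 y3. S3_copy V E x1 x2 x3 y1 y2 y3}"

definition reduced_V :: "'a set \<Rightarrow> 'a set set \<Rightarrow> 'a set" where
  "reduced_V V E = \<Union> (central_sets V E)"

definition reduced_E :: "'a set \<Rightarrow> 'a set set \<Rightarrow> 'a set set" where
  "reduced_E V E = {e. \<exists>X\<in>central_sets V E. e \<subseteq> X \<and> card e = 2}"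

definition reduced_triangles :: "'a set \<Rightarrow> 'a set set \<Rightarrow> 'a set set" where
  "reduced_triangles V E = {T. T \<subseteq> reduced_V V E \<and> card T = 3 \<and>
     (\<forall>u\<in>T. \<forall>v\<in>T. u \<noteq> v \<longrightarrow> {u, v} \<in> reduced_E V E)}"

end

theory Submission
  imports Defs
begin

text \<open>In an outerplanar embedding two common neighbours of an edge ab lie on opposite sides of
  the chord ab. Hence there is no K4, each side of a triangle abc carries at most one further
  triangle, and the apexes of such triangles over different sides of abc are pairwise non-adjacent.
  Consequently the central vertex sets of copies of S_3 are exactly the triangles each side of which
  carries a second triangle, and these are also exactly the triangles of the reduced graph.
  If the graph is maximal, every inner face is a triangle (a chord of a larger face could be added),
  and the faces adjacent to a triangular face are the triangles on its sides; so a face has dual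
  degree 3 iff every side carries a second triangle.\<close>

definition chord_separates :: "('a \<Rightarrow> nat) \<Rightarrow> 'a \<Rightarrow> 'a \<Rightarrow> 'a \<Rightarrow> 'a \<Rightarrow> bool" where
  "chord_separates pos a b c d \<longleftrightarrow> between pos a b c \<noteq> between pos a b d"

lemma not_between_endpoints: "\<not> between pos a b a" "\<not> between pos a b b"
  by (auto simp: between_def)

lemma chord_separates_sym:
  assumes "distinct (map pos [a, b, c, d])" "chord_separates pos a b c d"
  shows "chord_separates pos c d a b"
  using assms unfolding chord_separates_def between_def by (auto simp: min_def max_def split: if_splits)

lemma chord_separates_some_matching:
  assumes "distinct (map pos [a, b, c, d])"
  shows "chord_separates pos a b c d \<or> chord_separates pos a c b d \<or> chord_separates pos a d b c"
  using assms unfolding chord_separates_def between_def by (auto simp: min_def max_def split: if_splits)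

lemma crossingI:
  "distinct [a, b, c, d] \<Longrightarrow> chord_separates pos a b c d \<Longrightarrow> crossing pos {a, b} {c, d}"
  unfolding crossing_def chord_separates_def by (intro exI[of _ a] exI[of _ b] exI[of _ c] exI[of _ d]) simp

lemma crossingE:
  assumes "crossing pos e1 e2"
  obtains a b c d where "e1 = {a, b}" "e2 = {c, d}" "distinct [a, b, c, d]" "chord_separates pos a b c d"
  using assms that unfolding crossing_def chord_separates_def by metis

lemma crossing_sym:
  assumes "inj_on pos (e1 \<union> e2)" "crossing pos e1 e2"
  shows "crossing pos e2 e1"
proof -
  obtain a b c d where abcd: "e1 = {a, b}" "e2 = {c, d}" "distinct [a, b, c, d]"
    and sep: "chord_separates pos a b c d"
    using assms(2) by (rule crossingE)
  have "distinct (map pos [a, b, c, d])"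
    using abcd assms(1) by (simp add: inj_on_def)
  then have "chord_separates pos c d a b"
    using sep by (rule chord_separates_sym)
  then show ?thesis
    using abcd crossingI[of c d a b] by auto
qed

lemma not_crossing_self: "\<not> crossing pos e e"
  by (auto simp: crossing_def doubleton_eq_iff)

lemma separates_if_chord_separates:
  assumes "c \<in> F" "d \<in> F" "c \<notin> {a, b}" "d \<notin> {a, b}" "chord_separates pos a b c d"
  shows "separates pos {a, b} F"
  using assms unfolding separates_def chord_separates_def by blast

definition triangle :: "'a set set \<Rightarrow> 'a set \<Rightarrow> bool" where
  "triangle E T \<longleftrightarrow> card T = 3 \<and> (\<forall>u\<in>T. \<forall>v\<in>T. u \<noteq> v \<longrightarrow> {u, v} \<in> E)"

definition outer_apexes :: "'a set set \<Rightarrow> 'a set \<Rightarrow> 'a set \<Rightarrow> 'a set" where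
  "outer_apexes E T e = {z. z \<notin> T \<and> (\<forall>u\<in>e. {u, z} \<in> E)}"

definition central_triangle :: "'a set set \<Rightarrow> 'a set \<Rightarrow> bool" where
  "central_triangle E T \<longleftrightarrow> triangle E T \<and> (\<forall>u\<in>T. \<forall>v\<in>T. u \<noteq> v \<longrightarrow> outer_apexes E T {u, v} \<noteq> {})"

lemma triangleI:
  assumes "distinct [a, b, c]" "{a, b} \<in> E" "{b, c} \<in> E" "{a, c} \<in> E"
  shows "triangle E {a, b, c}"
  using assms unfolding triangle_def by (auto simp: insert_commute)

lemma triangleE:
  assumes "triangle E T"
  obtains a b c where "T = {a, b, c}" "distinct [a, b, c]" "{a, b} \<in> E" "{b, c} \<in> E" "{a, c} \<in> E"
proof -
  obtain a b c where "T = {a, b, c}" "distinct [a, b, c]"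
    using assms unfolding triangle_def card_3_iff by auto
  with assms that show ?thesis unfolding triangle_def by auto
qed

lemma card_3_obtain_third:
  assumes "card T = 3" "p \<in> T" "q \<in> T" "p \<noteq> q"
  obtains r where "T = {p, q, r}" "r \<notin> {p, q}"
proof -
  have "card (T - {p, q}) = 1" using assms by (simp add: card_Diff_subset)
  then obtain r where "T - {p, q} = {r}" by (meson card_1_singletonE)
  then have "T = {p, q, r}" "r \<notin> {p, q}" using assms(2,3) by auto
  then show ?thesis by (rule that)
qed

lemma central_triangle_iff_sides:
  assumes "distinct [a, b, c]"
  shows "central_triangle E {a, b, c} \<longleftrightarrow>
    triangle E {a, b, c} \<and> (\<forall>e\<in>{{a, b}, {b, c}, {a, c}}. outer_apexes E {a, b, c} e \<noteq> {})"
  using assms unfolding central_triangle_def by (auto simp: insert_commute)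

lemma central_triangle_of_S3_copy:
  assumes "S3_copy V E x1 x2 x3 y1 y2 y3"
  shows "central_triangle E {x1, x2, x3}"
proof -
  have d: "distinct [x1, x2, x3, y1, y2, y3]"
    using assms unfolding S3_copy_def by (elim conjE)
  have induced: "{e \<in> E. e \<subseteq> {x1, x2, x3, y1, y2, y3}} =
       {{x1, x2}, {x1, x3}, {x2, x3}, {x1, y1}, {x2, y1}, {x2, y2}, {x3, y2}, {x3, y3}, {x1, y3}}"
    using assms unfolding S3_copy_def by (elim conjE)
  have "{{x1, x2}, {x1, x3}, {x2, x3}, {x1, y1}, {x2, y1}, {x2, y2}, {x3, y2}, {x3, y3}, {x1, y3}} \<subseteq> E"
    unfolding induced[symmetric] by blast
  then have "{x1, x2} \<in> E" "{x1, x3} \<in> E" "{x2, x3} \<in> E" "{x1, y1} \<in> E" "{x2, y1} \<in> E"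
    "{x2, y2} \<in> E" "{x3, y2} \<in> E" "{x3, y3} \<in> E" "{x1, y3} \<in> E"
    by simp_all
  with d have "triangle E {x1, x2, x3}"
    and "y1 \<in> outer_apexes E {x1, x2, x3} {x1, x2}"
    and "y2 \<in> outer_apexes E {x1, x2, x3} {x2, x3}"
    and "y3 \<in> outer_apexes E {x1, x2, x3} {x1, x3}"
    by (auto simp: triangleI outer_apexes_def)
  with d show ?thesis
    using central_triangle_iff_sides[of x1 x2 x3 E] by auto
qed

lemma central_triangle_if_pairs_covered:
  assumes card: "card T = 3"
    and cover: "\<And>u v. u \<in> T \<Longrightarrow> v \<in> T \<Longrightarrow> u \<noteq> v \<Longrightarrow> \<exists>X. central_triangle E X \<and> {u, v} \<subseteq> X"
  shows "central_triangle E T"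
proof -
  have "{u, v} \<in> E \<and> outer_apexes E T {u, v} \<noteq> {}" if uv: "u \<in> T" "v \<in> T" "u \<noteq> v" for u v
  proof -
    obtain X where X: "central_triangle E X" "{u, v} \<subseteq> X"
      using cover[OF uv] by blast
    then have X3: "card X = 3" and X_edges: "\<forall>p\<in>X. \<forall>q\<in>X. p \<noteq> q \<longrightarrow> {p, q} \<in> E"
      unfolding central_triangle_def triangle_def by simp_all
    then have "{u, v} \<in> E"
      using X(2) uv(3) by simp
    moreover have "outer_apexes E T {u, v} \<noteq> {}"
    proof (cases "X = T")
      case True
      then show ?thesis
        using X(1) uv unfolding central_triangle_def by simp
    next
      case False
      obtain w where w: "X = {u, v, w}" "w \<notin> {u, v}"
        using card_3_obtain_third[OF X3, of u v] X(2) uv(3) by auto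
      have "w \<notin> T"
      proof
        assume "w \<in> T"
        then have "X \<subseteq> T" using w uv by simp
        moreover have "finite T" using card by (metis card.infinite zero_neq_numeral)
        ultimately have "X = T" using card X3 by (simp add: card_subset_eq)
        with False show False ..
      qed
      moreover have "{u, w} \<in> E" "{v, w} \<in> E"
        using X_edges w by auto
      ultimately have "w \<in> outer_apexes E T {u, v}"
        unfolding outer_apexes_def by simp
      then show ?thesis by blast
    qed
    ultimately show ?thesis ..
  qed
  with card show ?thesis
    unfolding central_triangle_def triangle_def by simp
qed

lemma sum_eq_card_iff_all_one:
  fixes f :: "'b \<Rightarrow> nat"
  assumes "finite S" "\<And>x. x \<in> S \<Longrightarrow> f x \<le> 1"
  shows "(\<Sum>x\<in>S. f x) = card S \<longleftrightarrow> (\<forall>x\<in>S. f x = 1)"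
proof
  assume "(\<Sum>x\<in>S. f x) = card S"
  then have "(\<Sum>x\<in>S. f x) = (\<Sum>x\<in>S. 1)"
    by simp
  then show "\<forall>x\<in>S. f x = 1"
    using sum_mono_inv[where f = f and g = "\<lambda>_. 1" and I = S] assms by blast
qed simp

lemma outer_apex_faces_disjoint:
  assumes "e1 \<subseteq> T" "e2 \<subseteq> T" "e1 \<noteq> e2"
  shows "(\<lambda>z. insert z e1) ` outer_apexes E T e1 \<inter> (\<lambda>z. insert z e2) ` outer_apexes E T e2 = {}"
proof (rule equals0I)
  have side_of_face: "insert z e \<inter> T = e" if "z \<in> outer_apexes E T e" "e \<subseteq> T" for z e
    using that unfolding outer_apexes_def by auto
  fix F
  assume "F \<in> (\<lambda>z. insert z e1) ` outer_apexes E T e1 \<inter> (\<lambda>z. insert z e2) ` outer_apexes E T e2"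
  then obtain z w where z: "z \<in> outer_apexes E T e1" and w: "w \<in> outer_apexes E T e2"
    and Fz: "F = insert z e1" and Fw: "F = insert w e2"
    by blast
  have "e1 = F \<inter> T"
    unfolding Fz using side_of_face[OF z assms(1)] by simp
  moreover have "e2 = F \<inter> T"
    unfolding Fw using side_of_face[OF w assms(2)] by simp
  ultimately show False
    using assms(3) by simp
qed

locale outerplanar_embedding =
  fixes V :: "'a set" and E :: "'a set set" and pos :: "'a \<Rightarrow> nat"
  assumes emb: "outerplanar_emb V E pos"
begin

lemma finite_V: "finite V"
  using emb unfolding outerplanar_emb_def simple_graph_def by blast

lemma inj_on_pos: "inj_on pos V"
  using emb unfolding outerplanar_emb_def by blast

lemma edgeE:
  assumes "e \<in> E"
  obtains u v where "e = {u, v}" "u \<noteq> v" "u \<in> V" "v \<in> V"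
  using assms emb that unfolding outerplanar_emb_def simple_graph_def by blast

lemma edge_vertices:
  assumes "{u, v} \<in> E"
  shows "u \<in> V" "v \<in> V" "u \<noteq> v"
  using assms by (auto elim!: edgeE simp: doubleton_eq_iff)

lemma edge_subset_V: "e \<in> E \<Longrightarrow> e \<subseteq> V"
  by (auto elim!: edgeE)

lemma distinct_pos: "set xs \<subseteq> V \<Longrightarrow> distinct xs \<Longrightarrow> distinct (map pos xs)"
  using inj_on_pos by (simp add: distinct_map inj_on_subset)

lemma edges_not_separated:
  assumes "{a, b} \<in> E" "{c, d} \<in> E" "distinct [a, b, c, d]"
  shows "\<not> chord_separates pos a b c d"
proof
  assume "chord_separates pos a b c d"
  then have "crossing pos {a, b} {c, d}"
    by (rule crossingI[OF assms(3)])
  with assms(1,2) emb show False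
    unfolding outerplanar_emb_def by blast
qed

lemma common_neighbours_separated:
  assumes "{a, c} \<in> E" "{b, c} \<in> E" "{a, x} \<in> E" "{b, x} \<in> E" "distinct [a, b, c, x]"
  shows "chord_separates pos a b c x"
proof -
  have "distinct (map pos [a, b, c, x])"
    using assms by (intro distinct_pos) (auto dest: edge_vertices)
  moreover have "\<not> chord_separates pos a c b x" "\<not> chord_separates pos a x b c"
    using edges_not_separated[of a c b x] edges_not_separated[of a x b c] assms by auto
  ultimately show ?thesis
    using chord_separates_some_matching[of pos a b c x] by blast
qed

lemma no_K4:
  assumes "distinct [a, b, c, d]" "{a, b} \<in> E" "{a, c} \<in> E" "{a, d} \<in> E"
    "{b, c} \<in> E" "{b, d} \<in> E" "{c, d} \<in> E"
  shows False
  using common_neighbours_separated[of a c b d] edges_not_separated[of a b c d] assms by auto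

lemma outer_apex_unique:
  assumes "distinct [a, b, c]" "{a, c} \<in> E" "{b, c} \<in> E"
    and "z \<notin> {a, b, c}" "{a, z} \<in> E" "{b, z} \<in> E"
    and "w \<notin> {a, b, c}" "{a, w} \<in> E" "{b, w} \<in> E"
  shows "z = w"
proof (rule ccontr)
  assume "z \<noteq> w"
  then have "chord_separates pos a b c z" "chord_separates pos a b c w" "chord_separates pos a b z w"
    using common_neighbours_separated[of a c b] common_neighbours_separated[of a z b w] assms by auto
  then show False
    unfolding chord_separates_def by blast
qed

lemma outer_apex_nonadjacent:
  assumes "{a, b} \<in> E" "{a, c} \<in> E" "{b, c} \<in> E"
    and "z \<notin> {a, b, c}" "{a, z} \<in> E" "{b, z} \<in> E"
    and "{c, x} \<in> E" "x \<notin> {a, b, z}"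
  shows "{z, x} \<notin> E"
proof
  assume "{z, x} \<in> E"
  have "distinct [a, b, c, z, x]"
    using assms edge_vertices(3) by auto
  then have "chord_separates pos a b c z" "\<not> chord_separates pos a b c x" "\<not> chord_separates pos a b z x"
    using common_neighbours_separated[of a c b z] edges_not_separated[of a b c x]
      edges_not_separated[of a b z x] assms \<open>{z, x} \<in> E\<close> by auto
  then show False
    unfolding chord_separates_def by blast
qed

lemma S3_copy_of_apexes:
  assumes T: "distinct [a, b, c]" and ab: "{a, b} \<in> E" and bc: "{b, c} \<in> E" and ac: "{a, c} \<in> E"
    and z: "z \<notin> {a, b, c}" "{a, z} \<in> E" "{b, z} \<in> E"
    and x: "x \<notin> {a, b, c}" "{b, x} \<in> E" "{c, x} \<in> E"
    and y: "y \<notin> {a, b, c}" "{a, y} \<in> E" "{c, y} \<in> E"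
  shows "S3_copy V E a b c z x y"
proof -
  have nonadj_third: "{c, z} \<notin> E" "{a, x} \<notin> E" "{b, y} \<notin> E"
    using no_K4[of a b c z] no_K4[of a b c x] no_K4[of a b c y] T ab bc ac z x y by auto
  then have "z \<noteq> x" "z \<noteq> y" "x \<noteq> y"
    using x y by auto
  then have nonadj_apexes: "{z, x} \<notin> E" "{z, y} \<notin> E" "{x, y} \<notin> E"
    using outer_apex_nonadjacent[of a b c z x] outer_apex_nonadjacent[of a b c z y]
      outer_apex_nonadjacent[of b c a x y] ab bc ac z x y by (auto simp: insert_commute)
  have induced: "{e \<in> E. e \<subseteq> {a, b, c, z, x, y}} =
      {{a, b}, {a, c}, {b, c}, {a, z}, {b, z}, {b, x}, {c, x}, {c, y}, {a, y}}"
  proof (intro equalityI subsetI)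
    fix e
    assume "e \<in> {e \<in> E. e \<subseteq> {a, b, c, z, x, y}}"
    then have "e \<in> E" "e \<subseteq> {a, b, c, z, x, y}"
      by auto
    obtain p q where "e = {p, q}" "p \<noteq> q"
      using \<open>e \<in> E\<close> by (rule edgeE)
    with \<open>e \<in> E\<close> \<open>e \<subseteq> {a, b, c, z, x, y}\<close>
    have e: "e = {p, q}" "{p, q} \<in> E" "p \<noteq> q"
      and "p \<in> {a, b, c, z, x, y}" "q \<in> {a, b, c, z, x, y}"
      by auto
    then have "p = a \<or> p = b \<or> p = c \<or> p = z \<or> p = x \<or> p = y"
      and "q = a \<or> q = b \<or> q = c \<or> q = z \<or> q = x \<or> q = y"
      by simp_all
    then show "e \<in> {{a, b}, {a, c}, {b, c}, {a, z}, {b, z}, {b, x}, {c, x}, {c, y}, {a, y}}"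
      using e nonadj_third nonadj_apexes by (elim disjE) (simp_all add: insert_commute)
  next
    fix e
    assume "e \<in> {{a, b}, {a, c}, {b, c}, {a, z}, {b, z}, {b, x}, {c, x}, {c, y}, {a, y}}"
    then show "e \<in> {e \<in> E. e \<subseteq> {a, b, c, z, x, y}}"
      using ab bc ac z x y by auto
  qed
  have "{a, b, c, z, x, y} \<subseteq> V"
    using ab bc z x y by (auto dest: edge_vertices)
  moreover have "distinct [a, b, c, z, x, y]"
    using T z x y \<open>z \<noteq> x\<close> \<open>z \<noteq> y\<close> \<open>x \<noteq> y\<close> by auto
  ultimately show ?thesis
    unfolding S3_copy_def using induced by blast
qed

lemma S3_copy_of_central_triangle:
  assumes "central_triangle E T"
  shows "T \<in> central_sets V E"
proof -
  obtain a b c where T: "T = {a, b, c}" "distinct [a, b, c]"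
    and ab: "{a, b} \<in> E" and bc: "{b, c} \<in> E" and ac: "{a, c} \<in> E"
    using assms unfolding central_triangle_def by (blast elim: triangleE)
  have "outer_apexes E T {a, b} \<noteq> {}" "outer_apexes E T {b, c} \<noteq> {}" "outer_apexes E T {a, c} \<noteq> {}"
    using assms central_triangle_iff_sides[OF T(2)] T(1) by auto
  then obtain z x y where "z \<in> outer_apexes E T {a, b}" "x \<in> outer_apexes E T {b, c}"
    "y \<in> outer_apexes E T {a, c}"
    by blast
  then have "S3_copy V E a b c z x y"
    using S3_copy_of_apexes[OF T(2) ab bc ac] unfolding outer_apexes_def T(1) by simp
  then show ?thesis
    unfolding central_sets_def T(1) by blast
qed

lemma central_sets_eq: "central_sets V E = {T. central_triangle E T}"
proof (intro equalityI subsetI)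
  fix T
  assume "T \<in> central_sets V E"
  then show "T \<in> {T. central_triangle E T}"
    unfolding central_sets_def by (auto intro: central_triangle_of_S3_copy)
qed (simp add: S3_copy_of_central_triangle)

lemma reduced_triangles_eq: "reduced_triangles V E = central_sets V E"
proof (intro equalityI subsetI)
  fix T
  assume "T \<in> reduced_triangles V E"
  then have card: "card T = 3"
    and sides: "\<And>u v. u \<in> T \<Longrightarrow> v \<in> T \<Longrightarrow> u \<noteq> v \<Longrightarrow> {u, v} \<in> reduced_E V E"
    unfolding reduced_triangles_def by auto
  have "central_triangle E T"
  proof (rule central_triangle_if_pairs_covered[OF card])
    fix u v
    assume "u \<in> T" "v \<in> T" "u \<noteq> v"
    then have "{u, v} \<in> reduced_E V E"
      by (rule sides)
    then show "\<exists>X. central_triangle E X \<and> {u, v} \<subseteq> X"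
      unfolding reduced_E_def central_sets_eq by auto
  qed
  then show "T \<in> central_sets V E"
    by (simp add: central_sets_eq)
next
  fix T
  assume T: "T \<in> central_sets V E"
  then have "card T = 3"
    by (simp add: central_sets_eq central_triangle_def triangle_def)
  moreover have "T \<subseteq> reduced_V V E"
    using T unfolding reduced_V_def by blast
  moreover have "{u, v} \<in> reduced_E V E" if "u \<in> T" "v \<in> T" "u \<noteq> v" for u v
    using T that unfolding reduced_E_def by auto
  ultimately show "T \<in> reduced_triangles V E"
    unfolding reduced_triangles_def by blast
qed

lemma triangle_sides:
  assumes "distinct [a, b, c]" "triangle E {a, b, c}"
  shows "{e \<in> E. e \<subseteq> {a, b, c}} = {{a, b}, {b, c}, {a, c}}"
proof (intro equalityI subsetI)
  fix e
  assume "e \<in> {e \<in> E. e \<subseteq> {a, b, c}}"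
  then have "e \<in> E" "e \<subseteq> {a, b, c}"
    by auto
  moreover obtain p q where "e = {p, q}" "p \<noteq> q"
    using \<open>e \<in> E\<close> by (rule edgeE)
  ultimately show "e \<in> {{a, b}, {b, c}, {a, c}}"
    by (auto simp: insert_commute)
next
  fix e
  assume "e \<in> {{a, b}, {b, c}, {a, c}}"
  then show "e \<in> {e \<in> E. e \<subseteq> {a, b, c}}"
    using assms unfolding triangle_def by auto
qed

lemma outer_apexes_subset_V:
  assumes "e \<in> E"
  shows "outer_apexes E T e \<subseteq> V"
proof
  fix z
  assume z: "z \<in> outer_apexes E T e"
  obtain p q where "e = {p, q}"
    using assms by (rule edgeE)
  with z have "{p, z} \<in> E"
    unfolding outer_apexes_def by simp
  then show "z \<in> V"
    by (rule edge_vertices(2))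
qed

lemma finite_outer_apexes: "e \<in> E \<Longrightarrow> finite (outer_apexes E T e)"
  by (rule finite_subset[OF outer_apexes_subset_V finite_V])

lemma card_outer_apexes_le_1:
  assumes T: "triangle E T" and e: "e \<in> E" "e \<subseteq> T"
  shows "card (outer_apexes E T e) \<le> 1"
proof -
  obtain p q where pq: "e = {p, q}" "p \<noteq> q"
    using e(1) by (rule edgeE)
  moreover have "card T = 3"
    using T unfolding triangle_def by blast
  ultimately obtain r where r: "T = {p, q, r}" "r \<notin> {p, q}"
    using e(2) by (elim card_3_obtain_third) auto
  have "{p, r} \<in> E" "{q, r} \<in> E"
    using T r pq(2) unfolding triangle_def by auto
  then have "z = w" if "z \<in> outer_apexes E T e" "w \<in> outer_apexes E T e" for z w
    using that outer_apex_unique[of p q r z w] pq r unfolding outer_apexes_def by auto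
  moreover have "finite (outer_apexes E T e)"
    using e(1) by (rule finite_outer_apexes)
  ultimately show ?thesis
    by (simp add: card_le_Suc0_iff_eq)
qed

lemma triangle_inner_face:
  assumes "triangle E T"
  shows "inner_face V E pos T"
proof -
  have edge: "{u, v} \<in> E" if "u \<in> T" "v \<in> T" "u \<noteq> v" for u v
    using assms that unfolding triangle_def by blast
  have "T \<subseteq> V"
    using assms by (auto elim!: triangleE dest: edge_vertices)
  moreover have "\<not> separates pos e T" if "e \<in> E" for e
  proof
    assume "separates pos e T"
    then obtain p q w1 w2 where e: "e = {p, q}" and w1: "w1 \<in> T" "between pos p q w1"
      and w2: "w2 \<in> T" "w2 \<notin> {p, q}" "\<not> between pos p q w2"
      unfolding separates_def by blast
    have "w1 \<notin> {p, q}"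
      using w1(2) by (auto simp: not_between_endpoints)
    moreover have "w1 \<noteq> w2" "p \<noteq> q"
      using w1 w2 that e edge_vertices(3) by auto
    ultimately have "\<not> chord_separates pos p q w1 w2"
      using edges_not_separated[of p q w1 w2] edge[OF w1(1) w2(1)] that e w2(2) by auto
    with w1 w2 show False
      unfolding chord_separates_def by simp
  qed
  ultimately show ?thesis
    using assms edge unfolding inner_face_def cyc_consec_def triangle_def by auto
qed

lemma edge_not_separating_face:
  assumes "inner_face V E pos F" "{a, b} \<in> E" "c \<in> F" "d \<in> F" "c \<notin> {a, b}" "d \<notin> {a, b}"
  shows "\<not> chord_separates pos a b c d"
proof
  assume "chord_separates pos a b c d"
  then have "separates pos {a, b} F"
    by (rule separates_if_chord_separates[OF assms(3-6)])
  with assms(1,2) show False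
    unfolding inner_face_def by blast
qed

text \<open>A chord drawn inside an inner face crosses no edge.\<close>
lemma inner_face_chord_addable:
  assumes F: "inner_face V E pos F" and uv: "u \<in> F" "v \<in> F" "u \<noteq> v"
  shows "outerplanar_emb V (insert {u, v} E) pos"
proof -
  have "u \<in> V" "v \<in> V"
    using F uv unfolding inner_face_def by auto
  then have simple: "simple_graph V (insert {u, v} E)"
    using emb uv(3) unfolding outerplanar_emb_def simple_graph_def by auto
  have chord_not_crossed: "\<not> crossing pos e {u, v}" if "e \<in> E" for e
  proof
    assume "crossing pos e {u, v}"
    then obtain a b c d where "e = {a, b}" "{u, v} = {c, d}" "distinct [a, b, c, d]"
      "chord_separates pos a b c d"
      by (rule crossingE)
    then show False
      using edge_not_separating_face[OF F, of a b c d] that uv by (auto simp: doubleton_eq_iff)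
  qed
  have "\<not> crossing pos e1 e2" if "e1 \<in> insert {u, v} E" "e2 \<in> insert {u, v} E" for e1 e2
  proof -
    have "e1 \<union> e2 \<subseteq> V"
      using that \<open>u \<in> V\<close> \<open>v \<in> V\<close> edge_subset_V by auto
    then have "inj_on pos (e1 \<union> e2)"
      using inj_on_pos by (rule inj_on_subset[rotated])
    then show ?thesis
      using that emb chord_not_crossed crossing_sym not_crossing_self
      unfolding outerplanar_emb_def by blast
  qed
  then show ?thesis
    using simple inj_on_pos unfolding outerplanar_emb_def by blast
qed

end

locale maximal_outerplanar_embedding = outerplanar_embedding +
  assumes maximal: "maximal_outerplanar V E"
begin

lemma inner_face_clique:
  assumes "inner_face V E pos F" "u \<in> F" "v \<in> F" "u \<noteq> v"
  shows "{u, v} \<in> E"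
proof (rule ccontr)
  assume "{u, v} \<notin> E"
  moreover have "outerplanar V (insert {u, v} E)"
    using inner_face_chord_addable[OF assms] unfolding outerplanar_def outerplanar_emb_def by blast
  moreover have "u \<in> V" "v \<in> V"
    using assms unfolding inner_face_def by auto
  ultimately show False
    using maximal assms(4) unfolding maximal_outerplanar_def by blast
qed

lemma inner_face_iff_triangle: "inner_face V E pos F \<longleftrightarrow> triangle E F"
proof
  assume F: "inner_face V E pos F"
  have "card F = 3"
  proof (rule ccontr)
    assume "card F \<noteq> 3"
    with F have "3 < card F"
      unfolding inner_face_def by auto
    then obtain S where S: "S \<subseteq> F" "card S = 3"
      by (meson less_imp_le obtain_subset_with_card_n)
    then obtain a b c where abc: "S = {a, b, c}" "distinct [a, b, c]"
      by (auto simp: card_3_iff)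
    have "\<not> F \<subseteq> S"
      using card_mono[of S F] S \<open>3 < card F\<close> by (metis card.infinite not_less zero_neq_numeral)
    then obtain d where "d \<in> F" "d \<notin> S"
      by blast
    then show False
      using no_K4[of a b c d] inner_face_clique[OF F] S(1) abc by auto
  qed
  then show "triangle E F"
    using inner_face_clique[OF F] unfolding triangle_def by blast
qed (rule triangle_inner_face)

lemma dual_neighbours_triangle:
  assumes T: "triangle E T"
  shows "{F. inner_face V E pos F \<and> dual_adj E T F} =
    (\<Union>e\<in>{e \<in> E. e \<subseteq> T}. (\<lambda>z. insert z e) ` outer_apexes E T e)"
proof (intro equalityI subsetI)
  fix F
  assume "F \<in> {F. inner_face V E pos F \<and> dual_adj E T F}"
  then obtain e where F: "triangle E F" "F \<noteq> T" and e: "e \<in> E" "e \<subseteq> T \<inter> F"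
    unfolding dual_adj_def inner_face_iff_triangle by blast
  obtain p q where pq: "e = {p, q}" "p \<noteq> q"
    using e(1) by (rule edgeE)
  have F3: "card F = 3" and T3: "card T = 3"
    using F(1) T unfolding triangle_def by blast+
  obtain r where r: "F = {p, q, r}" "r \<notin> {p, q}"
    using card_3_obtain_third[OF F3, of p q] pq e(2) by auto
  have "r \<notin> T"
  proof
    assume "r \<in> T"
    then have "F \<subseteq> T"
      using r pq e(2) by auto
    moreover have "finite T"
      using T3 by (metis card.infinite zero_neq_numeral)
    ultimately have "F = T"
      using F3 T3 by (simp add: card_subset_eq)
    with F(2) show False ..
  qed
  then have "r \<in> outer_apexes E T e"
    using F(1) r pq unfolding outer_apexes_def triangle_def by auto
  moreover have "F = insert r e"
    using r pq by auto
  ultimately show "F \<in> (\<Union>e\<in>{e \<in> E. e \<subseteq> T}. (\<lambda>z. insert z e) ` outer_apexes E T e)"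
    using e by blast
next
  fix F
  assume "F \<in> (\<Union>e\<in>{e \<in> E. e \<subseteq> T}. (\<lambda>z. insert z e) ` outer_apexes E T e)"
  then obtain e z where e: "e \<in> E" "e \<subseteq> T" and z: "z \<in> outer_apexes E T e"
    and F: "F = insert z e"
    by blast
  obtain p q where pq: "e = {p, q}" "p \<noteq> q"
    using e(1) by (rule edgeE)
  have "z \<notin> T" "{p, z} \<in> E" "{q, z} \<in> E"
    using z pq unfolding outer_apexes_def by auto
  then have "triangle E F"
    using triangleI[of z p q E] F pq e by (auto simp: insert_commute)
  moreover have "F \<noteq> T" "e \<subseteq> T \<inter> F"
    using \<open>z \<notin> T\<close> F e(2) by auto
  ultimately show "F \<in> {F. inner_face V E pos F \<and> dual_adj E T F}"
    unfolding dual_adj_def inner_face_iff_triangle using e(1) by blast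
qed

lemma dual_degree_triangle:
  assumes T: "triangle E T"
  shows "dual_degree V E pos T = (\<Sum>e\<in>{e \<in> E. e \<subseteq> T}. card (outer_apexes E T e))"
proof -
  let ?sides = "{e \<in> E. e \<subseteq> T}"
  let ?faces = "\<lambda>e. (\<lambda>z. insert z e) ` outer_apexes E T e"
  have "finite T"
    using T unfolding triangle_def by (metis card.infinite zero_neq_numeral)
  moreover have "?sides \<subseteq> Pow T"
    by blast
  ultimately have "finite ?sides"
    by (meson finite_Pow_iff finite_subset)
  moreover have "\<forall>e\<in>?sides. finite (?faces e)"
    by (simp add: finite_outer_apexes)
  moreover have "\<forall>e1\<in>?sides. \<forall>e2\<in>?sides. e1 \<noteq> e2 \<longrightarrow> ?faces e1 \<inter> ?faces e2 = {}"
    by (intro ballI impI outer_apex_faces_disjoint) auto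
  ultimately have "card (\<Union>(?faces ` ?sides)) = (\<Sum>e\<in>?sides. card (?faces e))"
    by (rule card_UN_disjoint)
  also have "\<dots> = (\<Sum>e\<in>?sides. card (outer_apexes E T e))"
  proof (rule sum.cong)
    fix e
    assume "e \<in> ?sides"
    then have "z \<notin> e" if "z \<in> outer_apexes E T e" for z
      using that unfolding outer_apexes_def by blast
    then have "inj_on (\<lambda>z. insert z e) (outer_apexes E T e)"
      by (intro inj_onI) (metis insertCI insertE)
    then show "card (?faces e) = card (outer_apexes E T e)"
      by (rule card_image)
  qed simp
  finally show ?thesis
    unfolding dual_degree_def dual_neighbours_triangle[OF T] .
qed

lemma dual_deg3_eq: "dual_deg3 V E pos = {T. central_triangle E T}"
proof -
  have "T \<in> dual_deg3 V E pos \<longleftrightarrow> central_triangle E T" for T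
  proof (cases "triangle E T")
    case False
    then show ?thesis
      unfolding dual_deg3_def central_triangle_def inner_face_iff_triangle by simp
  next
    case True
    then obtain a b c where abc: "T = {a, b, c}" "distinct [a, b, c]"
      by (rule triangleE)
    let ?sides = "{e \<in> E. e \<subseteq> T}"
    have sides: "?sides = {{a, b}, {b, c}, {a, c}}"
      using True unfolding abc(1) by (rule triangle_sides[OF abc(2)])
    have "{a, b} \<noteq> {b, c}" "{a, b} \<noteq> {a, c}" "{b, c} \<noteq> {a, c}"
      using abc(2) by (auto simp: doubleton_eq_iff)
    then have "finite ?sides" "card ?sides = 3"
      unfolding sides by simp_all
    have le1: "card (outer_apexes E T e) \<le> 1" if "e \<in> ?sides" for e
      using card_outer_apexes_le_1[OF True] that by blast
    have "T \<in> dual_deg3 V E pos \<longleftrightarrow> (\<Sum>e\<in>?sides. card (outer_apexes E T e)) = card ?sides"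
      using True \<open>card ?sides = 3\<close>
      unfolding dual_deg3_def inner_face_iff_triangle by (simp add: dual_degree_triangle[OF True])
    also have "\<dots> \<longleftrightarrow> (\<forall>e\<in>?sides. card (outer_apexes E T e) = 1)"
      using \<open>finite ?sides\<close> le1 by (rule sum_eq_card_iff_all_one)
    also have "\<dots> \<longleftrightarrow> (\<forall>e\<in>?sides. outer_apexes E T e \<noteq> {})"
    proof (intro ball_cong refl)
      fix e
      assume "e \<in> ?sides"
      then have "finite (outer_apexes E T e)"
        by (simp add: finite_outer_apexes)
      with le1[OF \<open>e \<in> ?sides\<close>] show "card (outer_apexes E T e) = 1 \<longleftrightarrow> outer_apexes E T e \<noteq> {}"
        using card_0_eq[symmetric] by fastforce
    qed
    also have "\<dots> \<longleftrightarrow> central_triangle E T"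
      using central_triangle_iff_sides[OF abc(2)] True abc(1) sides by simp
    finally show ?thesis .
  qed
  then show ?thesis
    by blast
qed

end

theorem lemma4p10:
  fixes V :: "'a set" and E :: "'a set set" and pos :: "'a \<Rightarrow> nat"
  assumes "maximal_outerplanar V E"
    and "outerplanar_emb V E pos"
  shows "\<exists>f g. bij_betw f (central_sets V E) (reduced_triangles V E) \<and>
               bij_betw g (reduced_triangles V E) (dual_deg3 V E pos)"
proof -
  interpret maximal_outerplanar_embedding V E pos
    by (intro maximal_outerplanar_embedding.intro outerplanar_embedding.intro
        maximal_outerplanar_embedding_axioms.intro assms)
  have "reduced_triangles V E = central_sets V E" "reduced_triangles V E = dual_deg3 V E pos"
    by (simp_all add: reduced_triangles_eq central_sets_eq dual_deg3_eq)
  then show ?thesis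
    by (metis bij_betw_id)
qed

end
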